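(* Consider the formal power series in $q$ \[ H(q) = \frac{2q J_{20}^{15} J_{2,20} J_{10,20}}{J_{1,20}^3 J_{3,20}^2 J_{4,20}^2 J_{5,20}^2 J_{6,20} J_{7,20}^2 J_{9,20}^3} + \sum_{n=-\infty}^{\infty} \frac{(-1)^n q^{10n^2+5n}}{1+q^{10n+2}}, \] where each summand is expanded as a power series in $q$ (for terms where $m=10n+2<0$, one writes $\frac{1}{1+q^{m}} = \frac{q^{-m}}{1+q^{-m}}$). Then every coefficient of $q^N$, $N\ge 0$, in $H(q)$ is strictly positive.
   Context: Notation: $(a;q)_\infty = \prod_{i\ge 0}(1-aq^i)$ and $(a_1,\dots,a_k;q)_\infty = (a_1;q)_\infty\cdots(a_k;q)_\infty$. For positive integers $a<b$: $J_b = (q^b;q^b)_\infty$ and $J_{a,b} = (q^a, q^{b-a}, q^b; q^b)_\infty$. *)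

theory Defs
  imports "HOL-Analysis.Analysis" "HOL-Computational_Algebra.Formal_Power_Series"
begin

text \<open>(q^a; q^d)_infinity as a formal power series in q, for a, d >= 1.
  Since every factor is 1 - q^(a+d i) with a+d i > i, the coefficient of q^N of
  the infinite product equals that of the finite product over i <= N.\<close>
definition qpoch_inf :: "nat \<Rightarrow> nat \<Rightarrow> real fps" where
  "qpoch_inf a d = Abs_fps (\<lambda>N. fps_nth (\<Prod>i\<le>N. (1 - fps_X ^ (a + d * i))) N)"

definition J :: "nat \<Rightarrow> real fps" where
  "J b = qpoch_inf b b"

definition Jab :: "nat \<Rightarrow> nat \<Rightarrow> real fps" where
  "Jab a b = qpoch_inf a b * qpoch_inf (b - a) b * qpoch_inf b b"

definition H_term :: "int \<Rightarrow> real fps" where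
  "H_term n = (let e = 10 * n^2 + 5 * n; m = 10 * n + 2 in
     if m \<ge> 0 then fps_const ((-1) powi n) * fps_X ^ nat e * inverse (1 + fps_X ^ nat m)
     else fps_const ((-1) powi n) * fps_X ^ nat (e - m) * inverse (1 + fps_X ^ nat (- m)))"

definition H_sum :: "real fps" where
  "H_sum = Abs_fps (\<lambda>N. \<Sum>\<^sub>\<infinity>n::int. fps_nth (H_term n) N)"

definition H :: "real fps" where
  "H = fps_const 2 * fps_X * J 20 ^ 15 * Jab 2 20 * Jab 10 20
       * inverse (Jab 1 20 ^ 3 * Jab 3 20 ^ 2 * Jab 4 20 ^ 2 * Jab 5 20 ^ 2 * Jab 6 20
                  * Jab 7 20 ^ 2 * Jab 9 20 ^ 3)
     + H_sum"

end

(* The fifteen factors J_20 of the denominator cancel, leaving 2q times a quotient of the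
   q-Pochhammer symbols (q^a;q^20)_inf.  Split each numerator symbol into its factors of even and
   of odd index, which are symbols of modulus 40, and pair every numerator factor with denominator
   factors: 1 - q^(2m) with 1/(1 - q^m), leaving 1 + q^m, and 1 - q^(a+b) with
   1/((1 - q^a)(1 - q^b)), leaving 1/(1 - q^a) + q^b/(1 - q^b).  These, and the unpaired denominator
   factors, have nonnegative coefficients; keeping two factors 1/(1 - q) aside, the product part is
   2q/(1 - q)^2 times a series with nonnegative coefficients and constant term 1, so its
   coefficient of q^N is at least 2N.  The n-th term of the bilateral sum has coefficients in
   {-1, 0, 1} and starts at q^e with e >= 2|n|, so the sum contributes more than -2N to q^N for
   N > 0, and exactly 1 for N = 0.  The infinite products are handled through finite truncations,
   which agree with them modulo q^n. *)

theory Submission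
  imports Defs
begin

unbundle no vec_syntax
unbundle fps_syntax

lemma dvd_diff_mult:
  fixes c :: "'a::comm_ring_1"
  assumes "c dvd a - a'" "c dvd b - b'"
  shows "c dvd a * b - a' * b'"
proof -
  have "a * b - a' * b' = a * (b - b') + (a - a') * b'"
    by (simp add: algebra_simps)
  with assms show ?thesis
    by (metis dvd_add dvd_mult dvd_mult2)
qed

lemma dvd_diff_power:
  fixes c :: "'a::comm_ring_1"
  shows "c dvd a - a' \<Longrightarrow> c dvd a ^ k - a' ^ k"
  by (induction k) (simp_all add: dvd_diff_mult)

lemma dvd_diff_prod:
  fixes c :: "'a::comm_ring_1"
  assumes "\<And>i. i \<in> A \<Longrightarrow> c dvd f i - g i"
  shows "c dvd prod f A - prod g A"
  using assms
proof (induction A rule: infinite_finite_induct)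
  case (insert i A)
  then show ?case
    by (simp add: dvd_diff_mult)
qed simp_all

lemma fps_dvd_diff_inverse:
  fixes f g :: "'a::field fps"
  assumes "c dvd f - g" "f $ 0 \<noteq> 0" "g $ 0 \<noteq> 0"
  shows "c dvd inverse f - inverse g"
proof -
  have "inverse f - inverse g = inverse f * inverse g * (g - f)"
    using assms(2,3) by (simp add: algebra_simps inverse_mult_eq_1 inverse_mult_eq_1')
  moreover have "c dvd g - f"
    using assms(1) by (metis dvd_minus_iff minus_diff_eq)
  ultimately show ?thesis
    by simp
qed

lemma fps_mult_inverse_cancel:
  "f $ 0 \<noteq> 0 \<Longrightarrow> f * A * inverse (f * B) = A * inverse (B :: 'a::field fps)"
  by (simp add: fps_inverse_mult inverse_mult_eq_1' ac_simps flip: mult.assoc)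

lemma fps_X_power_dvd_iff: "fps_X ^ n dvd (f :: 'a::comm_ring_1 fps) \<longleftrightarrow> (\<forall>k<n. f $ k = 0)"
proof
  assume "fps_X ^ n dvd f"
  then obtain g where "f = fps_X ^ n * g" ..
  then show "\<forall>k<n. f $ k = 0"
    by (simp add: fps_X_power_mult_nth)
next
  assume "\<forall>k<n. f $ k = 0"
  then have "f = fps_X ^ n * fps_shift n f"
    by (simp add: fps_eq_iff fps_X_power_mult_nth)
  then show "fps_X ^ n dvd f"
    by (metis dvd_triv_left)
qed

lemma fps_X_power_dvd_diff_nth:
  "fps_X ^ n dvd f - (g :: 'a::comm_ring_1 fps) \<Longrightarrow> k < n \<Longrightarrow> f $ k = g $ k"
  by (auto simp: fps_X_power_dvd_iff)

lemma fps_inverse_one_minus_const_X_power_nth: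
  fixes c :: "'a::field"
  assumes "0 < m"
  shows "inverse (1 - fps_const c * fps_X ^ m) $ k = (if m dvd k then c ^ (k div m) else 0)"
proof -
  define g :: "'a fps" where "g = Abs_fps (\<lambda>k. if m dvd k then c ^ (k div m) else 0)"
  have "(1 - fps_const c * fps_X ^ m) * g = 1"
  proof (rule fps_ext)
    fix n
    consider "n = 0" | "0 < n" "n < m" | "m \<le> n"
      by linarith
    then show "((1 - fps_const c * fps_X ^ m) * g) $ n = 1 $ n"
    proof cases
      case 2
      then have "\<not> m dvd n"
        by (auto dest: dvd_imp_le)
      with 2 show ?thesis
        by (simp add: g_def algebra_simps fps_X_power_mult_nth)
    next
      case 3
      then have "m dvd n \<longleftrightarrow> m dvd n - m" and "n div m = Suc ((n - m) div m)"
        using assms by (simp_all add: dvd_minus_self le_div_geq)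
      with 3 assms show ?thesis
        by (simp add: g_def algebra_simps fps_X_power_mult_nth)
    qed (use assms in \<open>simp add: g_def algebra_simps fps_X_power_mult_nth\<close>)
  qed
  then show ?thesis
    by (simp add: fps_inverse_unique g_def)
qed

lemma fps_inverse_one_minus_X_power_nth:
  "0 < m \<Longrightarrow> inverse (1 - fps_X ^ m :: 'a::field fps) $ k = (if m dvd k then 1 else 0)"
  using fps_inverse_one_minus_const_X_power_nth[of m "1::'a" k] by simp

lemma fps_inverse_one_plus_X_power_nth:
  "0 < m \<Longrightarrow>
    inverse (1 + fps_X ^ m :: 'a::field fps) $ k = (if m dvd k then (-1) ^ (k div m) else 0)"
  using fps_inverse_one_minus_const_X_power_nth[of m "-1::'a" k] by (simp flip: fps_const_neg)

definition qpoch_fin :: "nat \<Rightarrow> nat \<Rightarrow> nat \<Rightarrow> 'a::comm_ring_1 fps" where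
  "qpoch_fin a d L = (\<Prod>i<L. 1 - fps_X ^ (a + d * i))"

lemma qpoch_fin_add: "qpoch_fin a d (m + n) = qpoch_fin a d m * qpoch_fin (a + d * m) d n"
  unfolding qpoch_fin_def
  by (induction n) (simp_all add: algebra_simps)

lemma qpoch_fin_double: "qpoch_fin a d (2 * L) = qpoch_fin a (2 * d) L * qpoch_fin (a + d) (2 * d) L"
  unfolding qpoch_fin_def
  by (induction L) (simp_all add: algebra_simps)

lemma qpoch_fin_nth_0: "0 < a \<Longrightarrow> qpoch_fin a d L $ 0 = 1"
  unfolding qpoch_fin_def
  by (induction L) simp_all

lemma qpoch_fin_1: "qpoch_fin a d 1 = 1 - fps_X ^ a"
  by (simp add: qpoch_fin_def)

lemma qpoch_fin_cong_1: "n \<le> a \<Longrightarrow> fps_X ^ n dvd qpoch_fin a d L - 1"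
  unfolding qpoch_fin_def
  using dvd_diff_prod[of "{..<L}" "fps_X ^ n" "\<lambda>i. 1 - fps_X ^ (a + d * i)" "\<lambda>_. 1"]
  by (simp add: le_imp_power_dvd)

lemma qpoch_inf_cong:
  assumes "0 < d" "n \<le> L"
  shows "fps_X ^ n dvd qpoch_inf a d - qpoch_fin a d L"
  unfolding fps_X_power_dvd_iff
proof (intro allI impI)
  fix k
  assume "k < n"
  have split:
    "qpoch_fin a d L = (qpoch_fin a d (Suc k) * qpoch_fin (a + d * Suc k) d (L - Suc k) :: real fps)"
    using \<open>k < n\<close> assms(2) qpoch_fin_add[of a d "Suc k" "L - Suc k"] by simp
  have "fps_X ^ Suc k dvd qpoch_fin (a + d * Suc k) d (L - Suc k) - (1 :: real fps)"
    using mult_le_mono1[of 1 d "Suc k"] assms(1) by (intro qpoch_fin_cong_1 trans_le_add2) simp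
  then have "fps_X ^ Suc k dvd qpoch_fin a d L - qpoch_fin a d (Suc k) * (1 :: real fps)"
    unfolding split by (intro dvd_diff_mult) simp_all
  then have "qpoch_fin a d L $ k = (qpoch_fin a d (Suc k) * (1 :: real fps)) $ k"
    by (rule fps_X_power_dvd_diff_nth) simp
  then show "(qpoch_inf a d - qpoch_fin a d L) $ k = 0"
    by (simp add: qpoch_inf_def qpoch_fin_def lessThan_Suc_atMost)
qed

lemma qpoch_fin_mult_inverse:
  "0 < a \<Longrightarrow> qpoch_fin a d L * inverse (qpoch_fin a d L :: 'a::field fps) = 1"
  by (intro inverse_mult_eq_1') (simp add: qpoch_fin_nth_0)

lemma inverse_qpoch_fin_split:
  assumes "L \<le> L'"
  shows "inverse (qpoch_fin a d L' :: 'a::field fps)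
    = inverse (qpoch_fin a d L) * inverse (qpoch_fin (a + d * L) d (L' - L))"
  using assms by (metis qpoch_fin_add fps_inverse_mult le_add_diff_inverse)

definition nonneg_normalized :: "real fps \<Rightarrow> bool" where
  "nonneg_normalized f \<longleftrightarrow> f $ 0 = 1 \<and> (\<forall>n. 0 \<le> f $ n)"

lemma nonneg_normalized_1: "nonneg_normalized 1"
  by (simp add: nonneg_normalized_def)

lemma nonneg_normalized_mult:
  "nonneg_normalized f \<Longrightarrow> nonneg_normalized g \<Longrightarrow> nonneg_normalized (f * g)"
  unfolding nonneg_normalized_def by (auto simp: fps_mult_nth intro!: sum_nonneg)

lemma nonneg_normalized_prod_list:
  "(\<And>f. f \<in> set fs \<Longrightarrow> nonneg_normalized f) \<Longrightarrow> nonneg_normalized (prod_list fs)"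
  by (induction fs) (simp_all add: nonneg_normalized_1 nonneg_normalized_mult)

lemma nonneg_normalized_prod:
  "(\<And>i. i \<in> A \<Longrightarrow> nonneg_normalized (f i)) \<Longrightarrow> nonneg_normalized (prod f A)"
  by (induction A rule: infinite_finite_induct) (simp_all add: nonneg_normalized_1 nonneg_normalized_mult)

lemma nonneg_normalized_inverse_one_minus_X_power:
  "0 < m \<Longrightarrow> nonneg_normalized (inverse (1 - fps_X ^ m))"
  by (simp add: nonneg_normalized_def fps_inverse_one_minus_X_power_nth)

lemma nonneg_normalized_inverse_qpoch_fin: "0 < a \<Longrightarrow> nonneg_normalized (inverse (qpoch_fin a d L))"
  unfolding qpoch_fin_def inverse_prod_fps
  by (intro nonneg_normalized_prod nonneg_normalized_inverse_one_minus_X_power) simp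

lemma fps_one_minus_X_power_mult_inverse:
  "0 < m \<Longrightarrow> (1 - fps_X ^ m) * inverse (1 - fps_X ^ m :: 'a::field fps) = 1"
  by (intro inverse_mult_eq_1') simp

lemma nonneg_normalized_double_factor:
  assumes "0 < m"
  shows "nonneg_normalized ((1 - fps_X ^ (2 * m)) * inverse (1 - fps_X ^ m))"
proof -
  have "(1 - x * x) * w = 1 + x" if "(1 - x) * w = 1" for x w :: "real fps"
    using that by algebra
  then have "(1 - fps_X ^ (2 * m)) * inverse (1 - fps_X ^ m) = (1 + fps_X ^ m :: real fps)"
    using fps_one_minus_X_power_mult_inverse[OF assms] by (simp add: mult_2 power_add)
  then show ?thesis
    using assms by (simp add: nonneg_normalized_def fps_X_power_nth)
qed

lemma nonneg_normalized_sum_factor: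
  assumes "0 < a" "0 < b"
  shows "nonneg_normalized ((1 - fps_X ^ (a + b)) * inverse (1 - fps_X ^ a) * inverse (1 - fps_X ^ b))"
proof -
  have "(1 - x * y) * v * w = v + y * w" if "(1 - x) * v = 1" "(1 - y) * w = 1" for x y v w :: "real fps"
    using that by algebra
  then have "(1 - fps_X ^ (a + b)) * inverse (1 - fps_X ^ a) * inverse (1 - fps_X ^ b)
      = inverse (1 - fps_X ^ a) + fps_X ^ b * inverse (1 - fps_X ^ b :: real fps)"
    using fps_one_minus_X_power_mult_inverse[OF assms(1)] fps_one_minus_X_power_mult_inverse[OF assms(2)]
    by (simp add: power_add)
  then show ?thesis
    using assms by (simp add: nonneg_normalized_def fps_X_power_mult_nth fps_inverse_one_minus_X_power_nth)
qed

lemma nonneg_normalized_qpoch_fin_quotient: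
  assumes "0 < a" "L \<le> L'"
  shows "nonneg_normalized (qpoch_fin a d L * inverse (qpoch_fin a d L'))"
  using assms
  by (simp add: inverse_qpoch_fin_split mult.assoc[symmetric] qpoch_fin_mult_inverse
      nonneg_normalized_inverse_qpoch_fin)

lemma nonneg_normalized_qpoch_fin_double:
  assumes "0 < a" "L \<le> L'"
  shows "nonneg_normalized (qpoch_fin (2 * a) (2 * d) L * inverse (qpoch_fin a d L'))"
proof -
  have "nonneg_normalized (qpoch_fin (2 * a) (2 * d) L * inverse (qpoch_fin a d L))"
    unfolding qpoch_fin_def inverse_prod_fps prod.distrib[symmetric]
  proof (intro nonneg_normalized_prod)
    fix i
    show "nonneg_normalized ((1 - fps_X ^ (2 * a + 2 * d * i)) * inverse (1 - fps_X ^ (a + d * i)))"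
      using nonneg_normalized_double_factor[of "a + d * i"] assms(1) by (simp add: algebra_simps)
  qed
  then show ?thesis
    using assms by (simp add: inverse_qpoch_fin_split mult.assoc[symmetric] nonneg_normalized_mult
        nonneg_normalized_inverse_qpoch_fin)
qed

lemma nonneg_normalized_qpoch_fin_sum:
  assumes "0 < a" "0 < b" "L \<le> La" "s + L \<le> Lb"
  shows "nonneg_normalized
    (qpoch_fin (a + b + d * s) (2 * d) L * inverse (qpoch_fin a d La * qpoch_fin b d Lb))"
proof -
  have core: "nonneg_normalized (qpoch_fin (a + b + d * s) (2 * d) L
      * inverse (qpoch_fin a d L) * inverse (qpoch_fin (b + d * s) d L))"
    unfolding qpoch_fin_def inverse_prod_fps prod.distrib[symmetric]
  proof (intro nonneg_normalized_prod)
    fix i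
    have exponent: "a + b + d * s + 2 * d * i = (a + d * i) + (b + d * s + d * i)"
      by simp
    show "nonneg_normalized ((1 - fps_X ^ (a + b + d * s + 2 * d * i))
        * inverse (1 - fps_X ^ (a + d * i)) * inverse (1 - fps_X ^ (b + d * s + d * i)))"
      unfolding exponent using nonneg_normalized_sum_factor[of "a + d * i" "b + d * s + d * i"] assms(1,2)
      by simp
  qed
  have split_b: "inverse (qpoch_fin b d Lb) = inverse (qpoch_fin b d s) * inverse (qpoch_fin (b + d * s) d L)
      * inverse (qpoch_fin (b + d * (s + L)) d (Lb - (s + L)) :: real fps)"
    using assms(4) by (simp add: inverse_qpoch_fin_split[of s Lb] inverse_qpoch_fin_split[of L "Lb - s"]
        algebra_simps)
  have quotient_split: "qpoch_fin (a + b + d * s) (2 * d) L * inverse (qpoch_fin a d La * qpoch_fin b d Lb)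
      = (qpoch_fin (a + b + d * s) (2 * d) L
          * inverse (qpoch_fin a d L) * inverse (qpoch_fin (b + d * s) d L))
        * (inverse (qpoch_fin (a + d * L) d (La - L)) * inverse (qpoch_fin b d s)
           * inverse (qpoch_fin (b + d * (s + L)) d (Lb - (s + L))) :: real fps)"
    unfolding fps_inverse_mult split_b inverse_qpoch_fin_split[OF assms(3)] by (simp only: ac_simps)
  show ?thesis
    unfolding quotient_split using assms(1,2)
    by (intro nonneg_normalized_mult[OF core] nonneg_normalized_mult nonneg_normalized_inverse_qpoch_fin;
        simp)
qed

lemma inverse_one_minus_X_square_mult_nth_ge:
  assumes "nonneg_normalized G"
  shows "real k + 1 \<le> (inverse (1 - fps_X) ^ 2 * G) $ k"
proof -
  have partial_sum: "(inverse (1 - fps_X) * F) $ j = (\<Sum>i=0..j. F $ (j - i))" for F :: "real fps" and j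
    using fps_inverse_one_minus_X_power_nth[where 'a=real, of 1] by (simp add: fps_mult_nth)
  have "1 \<le> (inverse (1 - fps_X) * G) $ j" for j
  proof -
    have "G $ (j - j) \<le> (\<Sum>i=0..j. G $ (j - i))"
      by (rule member_le_sum) (use assms in \<open>auto simp: nonneg_normalized_def\<close>)
    then show ?thesis
      using assms by (simp add: partial_sum nonneg_normalized_def)
  qed
  then have "(\<Sum>i=0..k. 1) \<le> (\<Sum>i=0..k. (inverse (1 - fps_X) * G) $ (k - i))"
    by (intro sum_mono)
  then show ?thesis
    by (simp add: power2_eq_square mult.assoc partial_sum)
qed

text \<open>The product part of \<open>H\<close>, with \<open>Q a\<close> standing for \<open>(q\<^sup>a;q\<^sup>2\<^sup>0)\<^sub>\<infinity>\<close>
  and the fifteen factors \<open>J\<^sub>2\<^sub>0\<close> of the denominator cancelled.\<close>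
definition theta_quotient :: "(nat \<Rightarrow> real fps) \<Rightarrow> real fps" where
  "theta_quotient Q = fps_const 2 * fps_X * Q 20 ^ 2 * Q 2 * Q 18 * Q 10 ^ 2
     * inverse (Q 1 ^ 3 * Q 19 ^ 3 * Q 3 ^ 2 * Q 17 ^ 2 * Q 4 ^ 2 * Q 16 ^ 2 * Q 5 ^ 2 * Q 15 ^ 2
       * Q 6 * Q 14 * Q 7 ^ 2 * Q 13 ^ 2 * Q 9 ^ 3 * Q 11 ^ 3)"

lemma H_eq_theta_quotient: "H = theta_quotient (\<lambda>a. qpoch_inf a 20) + H_sum"
proof -
  define Q where "Q = (\<lambda>a. qpoch_inf a 20)"
  have num: "fps_const 2 * fps_X * J 20 ^ 15 * Jab 2 20 * Jab 10 20
      = Q 20 ^ 15 * (fps_const 2 * fps_X * Q 20 ^ 2 * Q 2 * Q 18 * Q 10 ^ 2)"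
    by (simp add: J_def Jab_def Q_def) algebra
  have den: "Jab 1 20 ^ 3 * Jab 3 20 ^ 2 * Jab 4 20 ^ 2 * Jab 5 20 ^ 2 * Jab 6 20 * Jab 7 20 ^ 2 * Jab 9 20 ^ 3
      = Q 20 ^ 15 * (Q 1 ^ 3 * Q 19 ^ 3 * Q 3 ^ 2 * Q 17 ^ 2 * Q 4 ^ 2 * Q 16 ^ 2 * Q 5 ^ 2 * Q 15 ^ 2
        * Q 6 * Q 14 * Q 7 ^ 2 * Q 13 ^ 2 * Q 9 ^ 3 * Q 11 ^ 3)"
    by (simp add: Jab_def Q_def) algebra
  have "(Q 20 ^ 15) $ 0 \<noteq> 0"
    by (simp add: Q_def qpoch_inf_def)
  then show ?thesis
    unfolding H_def num den by (simp add: fps_mult_inverse_cancel theta_quotient_def Q_def)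
qed

lemma theta_quotient_cong:
  assumes "0 < n"
    and cong: "\<And>a. fps_X ^ n dvd Q a - Q' a"
    and nonzero: "\<And>a. 0 < a \<Longrightarrow> Q' a $ 0 \<noteq> 0"
  shows "fps_X ^ n dvd theta_quotient Q - theta_quotient Q'"
proof -
  have "Q a $ 0 \<noteq> 0" if "0 < a" for a
    using fps_X_power_dvd_diff_nth[OF cong assms(1)] nonzero[OF that] by simp
  then show ?thesis
    unfolding theta_quotient_def
    by (intro dvd_diff_mult dvd_diff_power fps_dvd_diff_inverse cong) (simp_all add: nonzero)
qed

lemma theta_quotient_qpoch_fin_factor:
  assumes "0 < L"
  obtains G where "nonneg_normalized G"
    and "theta_quotient (\<lambda>a. qpoch_fin a 20 (2 * L)) = fps_const 2 * fps_X * inverse (1 - fps_X) ^ 2 * G"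
proof -
  define T :: "nat \<Rightarrow> real fps" where "T = (\<lambda>a. qpoch_fin a 20 (2 * L))"
  define E :: "nat \<Rightarrow> real fps" where "E = (\<lambda>c. qpoch_fin c 40 L)"
  have T_numerator: "T 2 = E 2 * E 22" "T 18 = E 18 * E 38" "T 10 = E 10 * E 30" "T 20 = E 20 * E 40"
    by (simp_all add: T_def E_def qpoch_fin_double[of _ 20 L, simplified])
  have double: "nonneg_normalized (E (2 * a) * inverse (T a))" if "0 < a" for a
    using nonneg_normalized_qpoch_fin_double[of a L "2 * L" 20] that by (simp add: E_def T_def)
  \<comment> \<open>Two residues below 20 never add up to 40, so 1 - q^(40 + 40j) is paired with the
    factors 1 - q^(7 + 20j) and 1 - q^(13 + 20(j + 1)) of different index: this is the shift s = 1.\<close>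
  have sum: "nonneg_normalized (E (a + b + 20 * s) * inverse (T a * T b))"
    if "0 < a" "0 < b" "s \<le> 1" for a b s
    using nonneg_normalized_qpoch_fin_sum[of a b L "2 * L" s "2 * L" 20] that assms
    by (simp add: E_def T_def)
  have spare: "nonneg_normalized ((1 - fps_X) * inverse (T 1))"
    using nonneg_normalized_qpoch_fin_quotient[of 1 1 "2 * L" 20, unfolded qpoch_fin_1] assms
    by (simp add: T_def)
  have inverse_T: "nonneg_normalized (inverse (T a))" if "0 < a" for a
    using that by (simp add: T_def nonneg_normalized_inverse_qpoch_fin)
  define G where "G = prod_list
    [(1 - fps_X) * inverse (T 1), (1 - fps_X) * inverse (T 1),
     E 2 * inverse (T 1), E 22 * inverse (T 11), E 18 * inverse (T 9), E 38 * inverse (T 19),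
     E 10 * inverse (T 5), E 10 * inverse (T 5), E 30 * inverse (T 15), E 30 * inverse (T 15),
     E 20 * inverse (T 3 * T 17), E 20 * inverse (T 9 * T 11),
     E 40 * inverse (T 7 * T 13), E 40 * inverse (T 4 * T 16),
     inverse (T 19), inverse (T 19), inverse (T 3), inverse (T 17), inverse (T 4), inverse (T 16),
     inverse (T 6), inverse (T 14), inverse (T 7), inverse (T 13), inverse (T 9), inverse (T 11)]"
  have G: "nonneg_normalized G"
    unfolding G_def
    using spare double[of 1] double[of 11] double[of 9] double[of 19] double[of 5] double[of 15]
      sum[of 3 17 0] sum[of 9 11 0] sum[of 7 13 1] sum[of 4 16 1] inverse_T
    by (intro nonneg_normalized_prod_list) auto
  have factor: "(1 - fps_X) ^ 2 * theta_quotient T = fps_const 2 * fps_X * G"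
    unfolding theta_quotient_def G_def T_numerator fps_inverse_mult fps_inverse_power
    by (simp only: prod_list.Cons prod_list.Nil power2_eq_square power3_eq_cube ac_simps
        mult_1_left mult_1_right)
  have "inverse (1 - fps_X) ^ 2 * (1 - fps_X) ^ 2 = (1 :: real fps)"
    by (simp add: inverse_mult_eq_1 flip: power_mult_distrib)
  then have "theta_quotient T = inverse (1 - fps_X) ^ 2 * ((1 - fps_X) ^ 2 * theta_quotient T)"
    by (simp flip: mult.assoc)
  also have "\<dots> = fps_const 2 * fps_X * inverse (1 - fps_X) ^ 2 * G"
    unfolding factor by (simp only: ac_simps)
  finally have "theta_quotient T = fps_const 2 * fps_X * inverse (1 - fps_X) ^ 2 * G" .
  with G show ?thesis
    using that unfolding T_def by blast
qed

lemma theta_quotient_qpoch_inf_nth_ge: "2 * real N \<le> theta_quotient (\<lambda>a. qpoch_inf a 20) $ N"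
proof (cases N)
  case 0
  then show ?thesis
    by (simp add: theta_quotient_def)
next
  case (Suc k)
  obtain G where G: "nonneg_normalized G"
    and factor: "theta_quotient (\<lambda>a. qpoch_fin a 20 (2 * N))
      = fps_const 2 * fps_X * inverse (1 - fps_X) ^ 2 * G"
    using theta_quotient_qpoch_fin_factor[of N] Suc by blast
  have "fps_X ^ Suc N dvd
      theta_quotient (\<lambda>a. qpoch_inf a 20) - theta_quotient (\<lambda>a. qpoch_fin a 20 (2 * N))"
    using Suc by (intro theta_quotient_cong qpoch_inf_cong) (simp_all add: qpoch_fin_nth_0)
  then have "theta_quotient (\<lambda>a. qpoch_inf a 20) $ N
      = theta_quotient (\<lambda>a. qpoch_fin a 20 (2 * N)) $ N"
    by (rule fps_X_power_dvd_diff_nth) simp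
  also have "\<dots> = 2 * (inverse (1 - fps_X) ^ 2 * G) $ k"
    unfolding factor using Suc by (simp add: mult.assoc)
  finally show ?thesis
    using inverse_one_minus_X_square_mult_nth_ge[OF G, of k] Suc by simp
qed

lemma H_term_form:
  obtains e M where "0 < M" "2 * \<bar>n\<bar> \<le> int e"
    "H_term n = fps_const ((-1) powi n) * fps_X ^ e * inverse (1 + fps_X ^ M)"
proof (cases "0 \<le> n")
  case True
  moreover have "0 \<le> n * n"
    by simp
  ultimately have "0 < 10 * n + 2" "2 * \<bar>n\<bar> \<le> 10 * n\<^sup>2 + 5 * n"
    by (simp_all add: power2_eq_square)
  then show ?thesis
    using that[of "nat (10 * n + 2)" "nat (10 * n\<^sup>2 + 5 * n)"] by (simp add: H_term_def Let_def)
next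
  case False
  then have "0 \<le> (- n) * (- n - 1)"
    by (intro mult_nonneg_nonneg) simp_all
  with False have "\<not> 0 \<le> 10 * n + 2" "2 * \<bar>n\<bar> \<le> 10 * n\<^sup>2 + 5 * n - (10 * n + 2)"
    by (simp_all add: power2_eq_square algebra_simps)
  then show ?thesis
    using that[of "nat (- (10 * n + 2))" "nat (10 * n\<^sup>2 + 5 * n - (10 * n + 2))"]
    by (simp add: H_term_def Let_def)
qed

lemma H_term_nth_abs_le: "\<bar>H_term n $ N\<bar> \<le> 1"
proof -
  obtain e M where "0 < M" "H_term n = fps_const ((-1) powi n) * fps_X ^ e * inverse (1 + fps_X ^ M)"
    using H_term_form by blast
  then show ?thesis
    by (simp add: mult.assoc fps_X_power_mult_nth fps_inverse_one_plus_X_power_nth abs_mult power_int_abs)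
qed

lemma H_term_nth_eq_0: "int N < 2 * \<bar>n\<bar> \<Longrightarrow> H_term n $ N = 0"
proof -
  assume "int N < 2 * \<bar>n\<bar>"
  moreover obtain e M where "2 * \<bar>n\<bar> \<le> int e"
    "H_term n = fps_const ((-1) powi n) * fps_X ^ e * inverse (1 + fps_X ^ M)"
    using H_term_form by blast
  ultimately show ?thesis
    by (simp add: mult.assoc fps_X_power_mult_nth)
qed

lemma H_sum_nth: "H_sum $ N = (\<Sum>n = - int (N div 2)..int (N div 2). H_term n $ N)"
proof -
  have "H_sum $ N = (\<Sum>\<^sub>\<infinity>n. H_term n $ N)"
    by (simp add: H_sum_def)
  also have "\<dots> = (\<Sum>\<^sub>\<infinity>n\<in>{- int (N div 2)..int (N div 2)}. H_term n $ N)"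
  proof (rule infsum_cong_neutral)
    fix n
    assume "n \<in> UNIV - {- int (N div 2)..int (N div 2)}"
    then have "int N < 2 * \<bar>n\<bar>"
      by auto
    then show "H_term n $ N = 0"
      by (rule H_term_nth_eq_0)
  qed simp_all
  finally show ?thesis
    by simp
qed

lemma H_sum_nth_gt: "- 2 * real N < H_sum $ N"
proof (cases "N = 0")
  case True
  then show ?thesis
    by (simp add: H_sum_nth H_term_def fps_inverse_one_plus_X_power_nth)
next
  case False
  have "\<bar>H_sum $ N\<bar> \<le> (\<Sum>n = - int (N div 2)..int (N div 2). \<bar>H_term n $ N\<bar>)"
    unfolding H_sum_nth by (rule sum_abs)
  also have "\<dots> \<le> (\<Sum>n = - int (N div 2)..int (N div 2). 1)"
    by (intro sum_mono H_term_nth_abs_le)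
  also have "\<dots> = real (2 * (N div 2) + 1)"
    by simp
  also have "\<dots> < real (2 * N)"
    unfolding of_nat_less_iff using False by presburger
  finally show ?thesis
    by simp
qed

theorem mainTheorem6:
  shows "\<forall>N. fps_nth H N > 0"
proof
  fix N
  have "H $ N = theta_quotient (\<lambda>a. qpoch_inf a 20) $ N + H_sum $ N"
    by (simp add: H_eq_theta_quotient)
  then show "H $ N > 0"
    using theta_quotient_qpoch_inf_nth_ge[of N] H_sum_nth_gt[of N] by linarith
qed

end
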